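(* Let $n \geq 1$ and let $D_n'$ be the digraph defined in the context. For any $u, v, w \in V(D_n')$, it is not the case that all of $uv$, $vw$, $uw$ are edges of $D_n'$. (That is, $D_n'$ contains no transitive tournament on three vertices.)
   Context: Digraphs $D_n$ are defined recursively. $D_1$ is a single vertex with no edges. For $n \geq 2$, take $n-1$ disjoint copies $D_{n-1}^1,\dots,D_{n-1}^{n-1}$ of $D_{n-1}$; let $\mathcal{T}$ be the set of all sequences $T=(x_1,\dots,x_{n-1})$ with $x_i \in V(D_{n-1}^i)$ for each $i$. For each $T \in \mathcal{T}$ add a new vertex $v_T$ and, for each $i \in \{1,\dots,n-1\}$, an edge from $x_i$ to $v_T$. The resulting digraph is $D_n$. It is a known fact that $D_n$ is acyclic and that for any two vertices $u,v$ of $D_n$ there is at most one directed path from $u$ to $v$ in $D_n$. The length of a path is its number of edges. The digraph $D_n'$ has $V(D_n')=V(D_n)$ and, for every ordered pair $(u,v)$ of vertices such that there is a directed path in $D_n$ from $u$ to $v$: if that path has length $\equiv 1 \pmod 3$, $D_n'$ has the edge $uv$, called positive; if that path has length $\equiv 2 \pmod 3$, $D_n'$ has the edge $vu$, called negative. $D_n'$ has no other edges. *)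

theory Defs
  imports Main
begin

text \<open>Base is the single vertex of D_1;
  Copy i x is the vertex x of the i-th copy of D_(n-1) inside D_n (1 <= i <= n-1);
  New xs is the new vertex v_T for T = (xs!0, ..., xs!(n-2)), where xs!(i-1) is
  a vertex of D_(n-1) taken in copy i.\<close>
datatype vtx = Base | Copy nat vtx | New "vtx list"

fun Dv :: "nat \<Rightarrow> vtx set" where
  "Dv 0 = {}"
| "Dv (Suc 0) = {Base}"
| "Dv (Suc (Suc m)) =
     {Copy i x | i x. i \<in> {1..Suc m} \<and> x \<in> Dv (Suc m)}
     \<union> {New xs | xs. length xs = Suc m \<and> (\<forall>i<Suc m. xs ! i \<in> Dv (Suc m))}"

fun De :: "nat \<Rightarrow> (vtx \<times> vtx) set" where
  "De 0 = {}"
| "De (Suc 0) = {}"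
| "De (Suc (Suc m)) =
     {(Copy i x, Copy i y) | i x y. i \<in> {1..Suc m} \<and> (x, y) \<in> De (Suc m)}
     \<union> {(Copy (Suc i) (xs ! i), New xs) | i xs.
          length xs = Suc m \<and> (\<forall>j<Suc m. xs ! j \<in> Dv (Suc m)) \<and> i < Suc m}"

definition dpath :: "nat \<Rightarrow> vtx \<Rightarrow> vtx \<Rightarrow> nat \<Rightarrow> bool" where
  "dpath n u v k \<longleftrightarrow> (\<exists>ps. length ps = Suc k \<and> distinct ps \<and> set ps \<subseteq> Dv n
      \<and> ps ! 0 = u \<and> ps ! k = v \<and> (\<forall>j<k. (ps ! j, ps ! Suc j) \<in> De n))"

definition De' :: "nat \<Rightarrow> (vtx \<times> vtx) set" where
  "De' n = {(u, v) | u v. u \<in> Dv n \<and> v \<in> Dv n \<and>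
      ((\<exists>k. dpath n u v k \<and> k mod 3 = 1) \<or> (\<exists>k. dpath n v u k \<and> k mod 3 = 2))}"

end

theory Submission
  imports Defs
begin

text \<open>Inside \<open>D\<^sub>n\<close> a walk either stays in one copy of \<open>D\<^sub>n\<^sub>-\<^sub>1\<close> or leaves it by a single
  edge into a new vertex, which is a sink; so, by induction on \<open>n\<close>, all walks between two
  given vertices have the same length.  The signed distance \<open>d(u,v)\<close> (the length of the walk
  from \<open>u\<close> to \<open>v\<close>, or minus the length of the walk from \<open>v\<close> to \<open>u\<close>) is therefore well
  defined and sums to zero around every triangle.  An edge \<open>uv\<close> of \<open>D\<^sub>n'\<close> forces
  \<open>d(u,v) \<equiv> 1 (mod 3)\<close>, so a transitive triangle would give \<open>1 + 1 \<equiv> 1 (mod 3)\<close>.\<close>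

lemma relpow_from_sink:
  assumes "(x, v) \<in> R ^^ k" and "\<And>y. (x, y) \<notin> R"
  shows "k = 0 \<and> v = x"
  using assms by (cases k) (simp, blast dest: relpow_Suc_D2)

definition unique_walk_lengths :: "('a \<times> 'a) set \<Rightarrow> bool" where
  "unique_walk_lengths R \<longleftrightarrow> (\<forall>u v k k'. (u, v) \<in> R ^^ k \<longrightarrow> (u, v) \<in> R ^^ k' \<longrightarrow> k = k')"

definition signed_dist :: "('a \<times> 'a) set \<Rightarrow> 'a \<Rightarrow> 'a \<Rightarrow> int \<Rightarrow> bool" where
  "signed_dist R u v d \<longleftrightarrow>
     (\<exists>k. (u, v) \<in> R ^^ k \<and> d = int k) \<or> (\<exists>k. (v, u) \<in> R ^^ k \<and> d = - int k)"

lemma signed_dist_swap: "signed_dist R v u (- d) \<longleftrightarrow> signed_dist R u v d"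
  unfolding signed_dist_def by (auto simp: minus_equation_iff)

lemma signed_dist_nonneg_walk:
  assumes "signed_dist R u v d" and "0 \<le> d"
  shows "(u, v) \<in> R ^^ nat d"
  using assms unfolding signed_dist_def by auto

lemma signed_dist_cycle_forward:
  assumes unique: "unique_walk_lengths R"
    and uv: "signed_dist R u v a" and vw: "signed_dist R v w b" and wu: "signed_dist R w u c"
    and "0 \<le> a" and "0 \<le> b"
  shows "a + b + c = 0"
proof -
  note unique = unique[unfolded unique_walk_lengths_def, rule_format]
  have uw: "(u, w) \<in> R ^^ nat (a + b)"
    using signed_dist_nonneg_walk[OF uv] signed_dist_nonneg_walk[OF vw] \<open>0 \<le> a\<close> \<open>0 \<le> b\<close>
    unfolding nat_add_distrib[OF \<open>0 \<le> a\<close> \<open>0 \<le> b\<close>] relpow_add by blast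
  from wu show ?thesis
    unfolding signed_dist_def
  proof (elim disjE exE conjE)
    fix k assume "(w, u) \<in> R ^^ k" "c = int k"
    with uw have "(u, u) \<in> R ^^ (nat (a + b) + k)"
      unfolding relpow_add by blast
    then have "nat (a + b) + k = 0"
      by (rule unique[OF _ relpow_0_I])
    with \<open>c = int k\<close> \<open>0 \<le> a\<close> \<open>0 \<le> b\<close> show ?thesis by linarith
  next
    fix k assume "(u, w) \<in> R ^^ k" "c = - int k"
    from unique[OF uw this(1)] have "nat (a + b) = k" .
    with \<open>c = - int k\<close> \<open>0 \<le> a\<close> \<open>0 \<le> b\<close> show ?thesis by linarith
  qed
qed

text \<open>Two consecutive sides of the triangle have the same sign; rotating, or reversing,
  the triangle makes them the two nonnegative sides of the previous lemma.\<close>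
lemma signed_dist_cycle:
  assumes unique: "unique_walk_lengths R"
    and uv: "signed_dist R u v a" and vw: "signed_dist R v w b" and wu: "signed_dist R w u c"
  shows "a + b + c = 0"
proof -
  note forward = signed_dist_cycle_forward[OF unique]
  note reversed = uv[THEN signed_dist_swap[THEN iffD2]] vw[THEN signed_dist_swap[THEN iffD2]]
    wu[THEN signed_dist_swap[THEN iffD2]]
  consider "0 \<le> a" "0 \<le> b" | "0 \<le> b" "0 \<le> c" | "0 \<le> c" "0 \<le> a"
    | "a \<le> 0" "b \<le> 0" | "b \<le> 0" "c \<le> 0" | "c \<le> 0" "a \<le> 0"
    using linorder_le_cases[of 0 a] linorder_le_cases[of 0 b] linorder_le_cases[of 0 c] by blast
  then show ?thesis
  proof cases
    case 1 with forward[OF uv vw wu] show ?thesis by simp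
  next
    case 2 with forward[OF vw wu uv] show ?thesis by simp
  next
    case 3 with forward[OF wu uv vw] show ?thesis by simp
  next
    case 4 with forward[OF reversed(2) reversed(1) reversed(3)] show ?thesis by simp
  next
    case 5 with forward[OF reversed(3) reversed(2) reversed(1)] show ?thesis by simp
  next
    case 6 with forward[OF reversed(1) reversed(3) reversed(2)] show ?thesis by simp
  qed
qed

lemma De_no_edge_from_Base: "(Base, y) \<notin> De n"
  by (induction n rule: De.induct) auto

lemma De_no_edge_from_New: "(New xs, y) \<notin> De n"
  by (induction n rule: De.induct) auto

lemma De_edge_from_Copy:
  assumes "(Copy i x, w) \<in> De (Suc (Suc m))"
  shows "(\<exists>y. w = Copy i y \<and> (x, y) \<in> De (Suc m)) \<or> (\<exists>xs j. w = New xs \<and> i = Suc j \<and> x = xs ! j)"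
  using assms by auto

lemma De_walk_from_Copy:
  assumes "(Copy i x, v) \<in> De (Suc (Suc m)) ^^ k"
  shows "(\<exists>y. v = Copy i y \<and> (x, y) \<in> De (Suc m) ^^ k)
    \<or> (\<exists>xs j k'. v = New xs \<and> k = Suc k' \<and> i = Suc j \<and> (x, xs ! j) \<in> De (Suc m) ^^ k')"
  using assms
proof (induction k arbitrary: x)
  case 0
  then show ?case by simp
next
  case (Suc k)
  from Suc.prems obtain w
    where w: "(Copy i x, w) \<in> De (Suc (Suc m))" and rest: "(w, v) \<in> De (Suc (Suc m)) ^^ k"
    by (rule relpow_Suc_E2)
  from De_edge_from_Copy[OF w] show ?case
  proof (elim disjE exE conjE)
    fix y assume "w = Copy i y" and xy: "(x, y) \<in> De (Suc m)"
    with Suc.IH rest have "(\<exists>z. v = Copy i z \<and> (y, z) \<in> De (Suc m) ^^ k)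
      \<or> (\<exists>xs j k'. v = New xs \<and> k = Suc k' \<and> i = Suc j \<and> (y, xs ! j) \<in> De (Suc m) ^^ k')"
      by simp
    then show ?case by (blast intro: relpow_Suc_I2[OF xy])
  next
    fix xs j assume "w = New xs" "i = Suc j" "x = xs ! j"
    moreover have "k = 0 \<and> v = New xs"
      using relpow_from_sink[OF rest[unfolded \<open>w = New xs\<close>] De_no_edge_from_New] .
    ultimately show ?case by simp
  qed
qed

lemma De_walk_length_unique:
  "(u, v) \<in> De n ^^ k \<Longrightarrow> (u, v) \<in> De n ^^ k' \<Longrightarrow> k = k'"
proof (induction n arbitrary: u v k k' rule: De.induct)
  case 1
  show ?case using relpow_from_sink[OF "1.prems"(1)] relpow_from_sink[OF "1.prems"(2)] by simp
next
  case 2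
  show ?case using relpow_from_sink[OF "2.prems"(1)] relpow_from_sink[OF "2.prems"(2)] by simp
next
  case (3 m)
  note sink = relpow_from_sink[OF "3.prems"(1)] relpow_from_sink[OF "3.prems"(2)]
  show ?case
  proof (cases u)
    case Base
    with sink show ?thesis by (simp add: De_no_edge_from_Base del: De.simps)
  next
    case (New xs)
    with sink show ?thesis by (simp add: De_no_edge_from_New del: De.simps)
  next
    case (Copy i x)
    with "3.prems" have walks:
      "(Copy i x, v) \<in> De (Suc (Suc m)) ^^ k" "(Copy i x, v) \<in> De (Suc (Suc m)) ^^ k'"
      by (simp_all only:)
    from De_walk_from_Copy[OF walks(1)] show ?thesis
    proof (elim disjE exE conjE)
      fix y assume v: "v = Copy i y" and "(x, y) \<in> De (Suc m) ^^ k"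
      moreover from De_walk_from_Copy[OF walks(2)] v have "(x, y) \<in> De (Suc m) ^^ k'"
        by (simp del: De.simps)
      ultimately show ?thesis using "3.IH" by blast
    next
      fix xs j k\<^sub>1 assume v: "v = New xs" "i = Suc j" and "k = Suc k\<^sub>1" "(x, xs ! j) \<in> De (Suc m) ^^ k\<^sub>1"
      moreover from De_walk_from_Copy[OF walks(2)] v obtain k\<^sub>2
        where "k' = Suc k\<^sub>2" "(x, xs ! j) \<in> De (Suc m) ^^ k\<^sub>2"
        by (auto simp del: De.simps)
      ultimately show ?thesis using "3.IH" by blast
    qed
  qed
qed

lemma unique_walk_lengths_De: "unique_walk_lengths (De n)"
  unfolding unique_walk_lengths_def by (intro allI impI) (rule De_walk_length_unique)

lemma dpath_walk:
  assumes "dpath n u v k"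
  shows "(u, v) \<in> De n ^^ k"
proof -
  from assms obtain ps where "ps ! 0 = u" "ps ! k = v" "\<forall>j<k. (ps ! j, ps ! Suc j) \<in> De n"
    unfolding dpath_def by blast
  then show ?thesis
    unfolding relpow_fun_conv by (intro exI[of _ "(!) ps"]) simp
qed

lemma De'_signed_dist:
  assumes "(u, v) \<in> De' n"
  shows "\<exists>d. signed_dist (De n) u v d \<and> d mod 3 = 1"
proof -
  from assms consider k where "dpath n u v k" "k mod 3 = 1" | k where "dpath n v u k" "k mod 3 = 2"
    unfolding De'_def by blast
  then show ?thesis
  proof cases
    case (1 k)
    then have "signed_dist (De n) u v (int k)"
      unfolding signed_dist_def by (blast dest: dpath_walk)
    moreover from 1 have "int k mod 3 = 1" by presburger
    ultimately show ?thesis by blast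
  next
    case (2 k)
    then have "signed_dist (De n) u v (- int k)"
      unfolding signed_dist_def by (blast dest: dpath_walk)
    moreover from 2 have "- int k mod 3 = 1" by presburger
    ultimately show ?thesis by blast
  qed
qed

theorem lemma2p3:
  fixes n :: nat and u v w :: vtx
  assumes "n \<ge> 1" and "u \<in> Dv n" and "v \<in> Dv n" and "w \<in> Dv n"
  shows "\<not> ((u, v) \<in> De' n \<and> (v, w) \<in> De' n \<and> (u, w) \<in> De' n)"
proof
  assume "(u, v) \<in> De' n \<and> (v, w) \<in> De' n \<and> (u, w) \<in> De' n"
  then obtain a b c where
    uv: "signed_dist (De n) u v a" "a mod 3 = 1" and vw: "signed_dist (De n) v w b" "b mod 3 = 1"
    and uw: "signed_dist (De n) u w c" "c mod 3 = 1"
    using De'_signed_dist by meson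
  from signed_dist_cycle[OF unique_walk_lengths_De uv(1) vw(1) signed_dist_swap[THEN iffD2, OF uw(1)]]
  have "a + b - c = 0" by simp
  with uv(2) vw(2) uw(2) show False by presburger
qed

end
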